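(* Let $\mathcal B$ be a positive MDABP. For each closed execution $\Upsilon$ in $\mathcal B$ that produces the set of ground atoms $W$, there exists a greedy execution $\Upsilon'$ in $\mathcal B$ that also produces $W$.
   Context: An MDABP is a pair $\mathcal{B}=\langle\mathcal{P},\mathcal{C}\rangle$ with process model $\mathcal{P}=\langle N,L\rangle$: $N=\langle P,T\rangle$ a finite directed multigraph (places $P$ with distinguished place $\mathit{start}$; transitions $T$), and $L$ assigns to each transition $t$ an execution condition $E_t$ (a Boolean conjunctive query over the database schema plus a distinguished relation $\mathit{In}$) and a writing rule $W_t: R(\bar u)\leftarrow B_t(\bar u)$ (head relation in the database schema, body a conjunctive query over the schema plus $\mathit{In}$); in general conditions and bodies may contain negated atoms and comparisons of a variable with a timestamp constant. A configuration $\mathcal C=\langle\mathcal I,\mathcal D,\tau\rangle$ has a database $\mathcal D$, current time $\tau\in\mathbb Q^+$, and instance part $\mathcal I$: a finite set of process instances, each with an input record $\mathit{In}(\bar c,\tau_o)$ and a current place. Atomic steps: traversal (an instance $o$ at $q$ with record $\mathit{In}(\bar c,\tau')$ traverses a transition $t$ from $q$ to $p$ if $E_t$ holds in $\mathcal D\cup\{\mathit{In}(\bar c,\tau')\}$; the database becomes $\mathcal D\cup\{R(\bar c'')\mid \bar c''\in B_t(\mathcal D\cup\{\mathit{In}(\bar c,\tau')\})\}$ and $o$ moves to $p$) and start (a new instance with some record $\mathit{In}(\bar c',\tau')$, $\tau'\ge\tau$, is placed at $\mathit{start}$ and the time becomes $\tau'$). An execution is a finite sequence of configurations starting from $\mathcal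 C$ obtained by atomic steps; it is closed if it has no start steps; it produces a set of facts $W$ if $W$ is contained in the database of its last configuration. $\mathcal B$ is positive if no execution condition or writing rule contains negated atoms. A safe step is a traversal step of an instance after which, given the current state of the database, the instance can return (by further traversals) to the place it occupied before the step; a critical step is a traversal step that is not safe. A greedy sequence is a sequence of safe steps that produces the largest number of new facts possible. A greedy execution is a closed execution in which greedy sequences and critical steps alternate. *)

theory Defs
  imports Main "HOL.Rat"
begin

datatype 'c val = Data 'c | TS rat

datatype 'r rname = Rel 'r | InRel

datatype ('x, 'c) trm = Var 'x | Cst "'c val"

datatype cmp = CLt | CLe | CEq | CNe | CGe | CGt

datatype ('r, 'x, 'c) lit =
    Pos "'r rname" "('x, 'c) trm list"
  | Neg "'r rname" "('x, 'c) trm list"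
  | Cmp 'x cmp rat

type_synonym ('r, 'x, 'c) query = "('r, 'x, 'c) lit list"

type_synonym ('r, 'c) fact = "'r \<times> 'c val list"

fun eval_trm :: "('x \<Rightarrow> 'c val) \<Rightarrow> ('x, 'c) trm \<Rightarrow> 'c val" where
  "eval_trm \<nu> (Var x) = \<nu> x"
| "eval_trm \<nu> (Cst c) = c"

fun cmp_sem :: "cmp \<Rightarrow> rat \<Rightarrow> rat \<Rightarrow> bool" where
  "cmp_sem CLt a b = (a < b)"
| "cmp_sem CLe a b = (a \<le> b)"
| "cmp_sem CEq a b = (a = b)"
| "cmp_sem CNe a b = (a \<noteq> b)"
| "cmp_sem CGe a b = (a \<ge> b)"
| "cmp_sem CGt a b = (a > b)"

fun sat_lit :: "('r rname \<times> 'c val list) set \<Rightarrow> ('x \<Rightarrow> 'c val) \<Rightarrow> ('r, 'x, 'c) lit \<Rightarrow> bool" where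
  "sat_lit I \<nu> (Pos R ts) = ((R, map (eval_trm \<nu>) ts) \<in> I)"
| "sat_lit I \<nu> (Neg R ts) = ((R, map (eval_trm \<nu>) ts) \<notin> I)"
| "sat_lit I \<nu> (Cmp x op k) = (\<exists>\<tau>. \<nu> x = TS \<tau> \<and> cmp_sem op \<tau> k)"

definition holds :: "('r rname \<times> 'c val list) set \<Rightarrow> ('r, 'x, 'c) query \<Rightarrow> bool" where
  "holds I q \<longleftrightarrow> (\<exists>\<nu>. \<forall>l\<in>set q. sat_lit I \<nu> l)"

definition answers :: "('r rname \<times> 'c val list) set \<Rightarrow> ('r, 'x, 'c) query \<Rightarrow> 'x list \<Rightarrow> 'c val list set" where
  "answers I q us = {map \<nu> us | \<nu>. \<forall>l\<in>set q. sat_lit I \<nu> l}"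

definition ext_db :: "('r, 'c) fact set \<Rightarrow> 'c val list \<times> rat \<Rightarrow> ('r rname \<times> 'c val list) set" where
  "ext_db D r = (\<lambda>(R, u). (Rel R, u)) ` D \<union> {(InRel, fst r @ [TS (snd r)])}"

fun trm_vars :: "('x, 'c) trm \<Rightarrow> 'x set" where
  "trm_vars (Var x) = {x}"
| "trm_vars (Cst c) = {}"

fun pos_vars_lit :: "('r, 'x, 'c) lit \<Rightarrow> 'x set" where
  "pos_vars_lit (Pos R ts) = \<Union> (trm_vars ` set ts)"
| "pos_vars_lit _ = {}"

fun vars_lit :: "('r, 'x, 'c) lit \<Rightarrow> 'x set" where
  "vars_lit (Pos R ts) = \<Union> (trm_vars ` set ts)"
| "vars_lit (Neg R ts) = \<Union> (trm_vars ` set ts)"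
| "vars_lit (Cmp x op k) = {x}"

definition range_restricted :: "('r, 'x, 'c) query \<Rightarrow> 'x set \<Rightarrow> bool" where
  "range_restricted q H \<longleftrightarrow>
     (\<Union>l\<in>set q. vars_lit l) \<union> H \<subseteq> (\<Union>l\<in>set q. pos_vars_lit l)"

fun is_neg :: "('r, 'x, 'c) lit \<Rightarrow> bool" where
  "is_neg (Neg R ts) = True"
| "is_neg _ = False"

text \<open>Process model P = <N, L>: finite directed multigraph with places and transitions
  (each transition has a source and a target place) and a labelling L giving, for each
  transition t, the execution condition E_t and writing rule W_t : R(u) <- B_t(u).\<close>
record ('p, 't, 'r, 'x, 'c) proc_model =
  places :: "'p set"
  trans :: "'t set"
  start :: 'p
  src :: "'t \<Rightarrow> 'p"
  tgt :: "'t \<Rightarrow> 'p"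
  cond :: "'t \<Rightarrow> ('r, 'x, 'c) query"
  wrel :: "'t \<Rightarrow> 'r"
  whead :: "'t \<Rightarrow> 'x list"
  wbody :: "'t \<Rightarrow> ('r, 'x, 'c) query"

text \<open>Configuration <I, D, tau>. Process instances are identified by natural numbers;
  each one carries its input record (c, tau_o) and its current place.\<close>
record ('p, 'r, 'c) config =
  inst :: "nat \<rightharpoonup> ('c val list \<times> rat) \<times> 'p"
  db :: "('r, 'c) fact set"
  time :: rat

record ('p, 't, 'r, 'x, 'c) mdabp =
  model :: "('p, 't, 'r, 'x, 'c) proc_model"
  conf :: "('p, 'r, 'c) config"

definition wf_model :: "('p, 't, 'r, 'x, 'c) proc_model \<Rightarrow> bool" where
  "wf_model P \<longleftrightarrow> finite (places P) \<and> finite (trans P) \<and> start P \<in> places P \<and>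
     (\<forall>t\<in>trans P. src P t \<in> places P \<and> tgt P t \<in> places P \<and>
        range_restricted (cond P t) {} \<and> range_restricted (wbody P t) (set (whead P t)))"

definition wf_config :: "('p, 't, 'r, 'x, 'c) proc_model \<Rightarrow> ('p, 'r, 'c) config \<Rightarrow> bool" where
  "wf_config P C \<longleftrightarrow> finite (db C) \<and> finite (dom (inst C)) \<and> 0 \<le> time C \<and>
     (\<forall>i r q. inst C i = Some (r, q) \<longrightarrow> q \<in> places P \<and> 0 \<le> snd r)"

definition wf_mdabp :: "('p, 't, 'r, 'x, 'c) mdabp \<Rightarrow> bool" where
  "wf_mdabp B \<longleftrightarrow> wf_model (model B) \<and> wf_config (model B) (conf B)"

definition positive :: "('p, 't, 'r, 'x, 'c) mdabp \<Rightarrow> bool" where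
  "positive B \<longleftrightarrow> (\<forall>t\<in>trans (model B).
      (\<forall>l\<in>set (cond (model B) t). \<not> is_neg l) \<and> (\<forall>l\<in>set (wbody (model B) t). \<not> is_neg l))"

definition trav :: "('p, 't, 'r, 'x, 'c) proc_model \<Rightarrow> ('p, 'r, 'c) config \<Rightarrow> nat \<Rightarrow> 't
                      \<Rightarrow> ('p, 'r, 'c) config \<Rightarrow> bool" where
  "trav P C i t C' \<longleftrightarrow> t \<in> trans P \<and>
     (\<exists>r. inst C i = Some (r, src P t) \<and>
          holds (ext_db (db C) r) (cond P t) \<and>
          C' = C\<lparr> inst := (inst C)(i \<mapsto> (r, tgt P t)),
                  db := db C \<union> {(wrel P t, u) | u. u \<in> answers (ext_db (db C) r) (wbody P t) (whead P t)} \<rparr>)"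

text \<open>Start step: a new instance with record In(c', tau'), tau' >= tau, is placed at start.
  (Not needed for closed executions; included for completeness.)\<close>
definition start_step :: "('p, 't, 'r, 'x, 'c) proc_model \<Rightarrow> ('p, 'r, 'c) config
                      \<Rightarrow> ('p, 'r, 'c) config \<Rightarrow> bool" where
  "start_step P C C' \<longleftrightarrow> (\<exists>i cs \<tau>'. i \<notin> dom (inst C) \<and> time C \<le> \<tau>' \<and>
     C' = C\<lparr> inst := (inst C)(i \<mapsto> ((cs, \<tau>'), start P)), time := \<tau>' \<rparr>)"

text \<open>A closed execution from C is a sequence of traversal steps, labelled by
  (instance, transition); it reaches configuration C'.\<close>
fun trav_path :: "('p, 't, 'r, 'x, 'c) proc_model \<Rightarrow> ('p, 'r, 'c) config \<Rightarrow> (nat \<times> 't) list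
                    \<Rightarrow> ('p, 'r, 'c) config \<Rightarrow> bool" where
  "trav_path P C [] C' = (C' = C)"
| "trav_path P C ((i, t) # s) C' = (\<exists>C1. trav P C i t C1 \<and> trav_path P C1 s C')"

definition safe_step :: "('p, 't, 'r, 'x, 'c) proc_model \<Rightarrow> ('p, 'r, 'c) config \<Rightarrow> nat \<Rightarrow> 't \<Rightarrow> bool" where
  "safe_step P C i t \<longleftrightarrow> (\<exists>C1. trav P C i t C1 \<and>
      (\<exists>ts C2. trav_path P C1 (map (\<lambda>t'. (i, t')) ts) C2 \<and>
               map_option snd (inst C2 i) = map_option snd (inst C i)))"

definition critical_step :: "('p, 't, 'r, 'x, 'c) proc_model \<Rightarrow> ('p, 'r, 'c) config \<Rightarrow> nat \<Rightarrow> 't \<Rightarrow> bool" where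
  "critical_step P C i t \<longleftrightarrow> (\<exists>C1. trav P C i t C1) \<and> \<not> safe_step P C i t"

fun safe_path :: "('p, 't, 'r, 'x, 'c) proc_model \<Rightarrow> ('p, 'r, 'c) config \<Rightarrow> (nat \<times> 't) list
                    \<Rightarrow> ('p, 'r, 'c) config \<Rightarrow> bool" where
  "safe_path P C [] C' = (C' = C)"
| "safe_path P C ((i, t) # s) C' =
     (safe_step P C i t \<and> (\<exists>C1. trav P C i t C1 \<and> safe_path P C1 s C'))"

definition greedy_seq :: "('p, 't, 'r, 'x, 'c) proc_model \<Rightarrow> ('p, 'r, 'c) config \<Rightarrow> (nat \<times> 't) list
                    \<Rightarrow> ('p, 'r, 'c) config \<Rightarrow> bool" where
  "greedy_seq P C s C' \<longleftrightarrow> safe_path P C s C' \<and>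
     (\<forall>s' C''. safe_path P C s' C'' \<longrightarrow> card (db C'' - db C) \<le> card (db C' - db C))"

text \<open>Greedy execution: closed execution of the form G_0 c_1 G_1 ... c_k G_k with G_i greedy
  sequences and c_i critical steps.\<close>
inductive greedy_exec :: "('p, 't, 'r, 'x, 'c) proc_model \<Rightarrow> ('p, 'r, 'c) config \<Rightarrow> (nat \<times> 't) list
                    \<Rightarrow> ('p, 'r, 'c) config \<Rightarrow> bool" for P where
  greedy_last: "greedy_seq P C s C' \<Longrightarrow> greedy_exec P C s C'"
| greedy_crit: "greedy_seq P C s C1 \<Longrightarrow> critical_step P C1 i t \<Longrightarrow> trav P C1 i t C2 \<Longrightarrow>
     greedy_exec P C2 s' C' \<Longrightarrow> greedy_exec P C (s @ (i, t) # s') C'"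

end

theory Submission imports Defs begin

text \<open>
  For a positive process model, enlarging the database can only enable more traversals and
  make them write more facts.  Consequently, once an instance has traversed a cycle, every
  step of that cycle remains safe in every later configuration that agrees on the instance,
  and every sequence of safe steps can be undone, i.e.\ extended by safe steps that bring all
  instances back to their places.  A closed execution is then simulated step by step by a
  greedy execution whose database is always at least as large and whose instances sit at the
  same places: a safe step of the execution is appended to the current greedy sequence, and a
  critical step is taken as a critical step followed by a greedy sequence that restores the
  places.  Greedy sequences exist because all reachable facts range over the finitely many
  values of the initial configuration.
\<close>

definition positive_model :: "('p, 't, 'r, 'x, 'c) proc_model \<Rightarrow> bool" where
  "positive_model P \<longleftrightarrow>
     (\<forall>t\<in>trans P. (\<forall>l\<in>set (cond P t). \<not> is_neg l) \<and> (\<forall>l\<in>set (wbody P t). \<not> is_neg l))"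

subsection \<open>Monotonicity of positive queries\<close>

lemma sat_lit_mono: "sat_lit I \<nu> l \<Longrightarrow> I \<subseteq> I' \<Longrightarrow> \<not> is_neg l \<Longrightarrow> sat_lit I' \<nu> l"
  by (cases l) auto

lemma holds_mono: "holds I q \<Longrightarrow> I \<subseteq> I' \<Longrightarrow> \<forall>l\<in>set q. \<not> is_neg l \<Longrightarrow> holds I' q"
  unfolding holds_def by (meson sat_lit_mono)

lemma answers_mono: "I \<subseteq> I' \<Longrightarrow> \<forall>l\<in>set q. \<not> is_neg l \<Longrightarrow> answers I q us \<subseteq> answers I' q us"
  unfolding answers_def by (blast intro: sat_lit_mono)

lemma ext_db_mono: "D \<subseteq> D' \<Longrightarrow> ext_db D r \<subseteq> ext_db D' r"
  unfolding ext_db_def by auto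

lemma trav_inst:
  "trav P C i t C1 \<Longrightarrow> \<exists>r. inst C i = Some (r, src P t) \<and> inst C1 = (inst C)(i \<mapsto> (r, tgt P t))"
  unfolding trav_def by auto

lemma trav_db_mono: "trav P C i t C1 \<Longrightarrow> db C \<subseteq> db C1"
  unfolding trav_def by auto

lemma trav_deterministic: "trav P C i t C1 \<Longrightarrow> trav P C i t C2 \<Longrightarrow> C1 = C2"
  unfolding trav_def by auto

lemma trav_path_append:
  "trav_path P C (s1 @ s2) C' \<longleftrightarrow> (\<exists>C1. trav_path P C s1 C1 \<and> trav_path P C1 s2 C')"
proof (induction s1 arbitrary: C)
  case (Cons a s1) then show ?case by (cases a) auto
qed simp

lemma safe_path_append:
  "safe_path P C (s1 @ s2) C' \<longleftrightarrow> (\<exists>C1. safe_path P C s1 C1 \<and> safe_path P C1 s2 C')"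
proof (induction s1 arbitrary: C)
  case (Cons a s1) then show ?case by (cases a) auto
qed simp

lemma safe_path_imp_trav_path: "safe_path P C s C' \<Longrightarrow> trav_path P C s C'"
proof (induction s arbitrary: C)
  case (Cons a s1) then show ?case by (cases a) auto
qed simp

lemma trav_path_db_mono: "trav_path P C s C' \<Longrightarrow> db C \<subseteq> db C'"
proof (induction s arbitrary: C)
  case (Cons a s1) then show ?case by (cases a) (auto dest!: trav_db_mono)
qed simp

lemma safe_path_db_mono: "safe_path P C s C' \<Longrightarrow> db C \<subseteq> db C'"
  by (intro trav_path_db_mono safe_path_imp_trav_path)

lemma trav_path_deterministic: "trav_path P C s C1 \<Longrightarrow> trav_path P C s C2 \<Longrightarrow> C1 = C2"
proof (induction s arbitrary: C)
  case (Cons a s1) then show ?case by (cases a) (auto dest: trav_deterministic)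
qed simp

lemma trav_path_keeps_record:
  "trav_path P X (map (Pair j) ts) X' \<Longrightarrow> inst X j = Some (r, q) \<Longrightarrow> \<exists>q'. inst X' j = Some (r, q')"
proof (induction ts arbitrary: X q)
  case (Cons t ts)
  then obtain X1 where x1: "trav P X j t X1" and p: "trav_path P X1 (map (Pair j) ts) X'" by auto
  from trav_inst[OF x1] Cons.prems(2) have "inst X1 j = Some (r, tgt P t)" by auto
  then show ?case using Cons.IH[OF p] by blast
qed simp

lemma trav_mono:
  assumes "positive_model P" "trav P X j t X1" "inst Y j = inst X j" "db X \<subseteq> db Y"
  shows "\<exists>Y1. trav P Y j t Y1 \<and> db X1 \<subseteq> db Y1 \<and> inst Y1 = (inst Y)(j := inst X1 j)"
proof -
  from assms(2) obtain r where t: "t \<in> trans P" and r: "inst X j = Some (r, src P t)"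
    and h: "holds (ext_db (db X) r) (cond P t)"
    and X1: "X1 = X\<lparr> inst := (inst X)(j \<mapsto> (r, tgt P t)),
               db := db X \<union> {(wrel P t, u) | u. u \<in> answers (ext_db (db X) r) (wbody P t) (whead P t)} \<rparr>"
    unfolding trav_def by blast
  have ext: "ext_db (db X) r \<subseteq> ext_db (db Y) r" using assms(4) by (rule ext_db_mono)
  have pc: "\<forall>l\<in>set (cond P t). \<not> is_neg l" and pb: "\<forall>l\<in>set (wbody P t). \<not> is_neg l"
    using assms(1) t unfolding positive_model_def by auto
  define Y1 where "Y1 = Y\<lparr> inst := (inst Y)(j \<mapsto> (r, tgt P t)),
               db := db Y \<union> {(wrel P t, u) | u. u \<in> answers (ext_db (db Y) r) (wbody P t) (whead P t)} \<rparr>"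
  have "trav P Y j t Y1" unfolding trav_def Y1_def
    using t r assms(3) holds_mono[OF h ext pc] by auto
  moreover have "db X1 \<subseteq> db Y1" unfolding X1 Y1_def using assms(4) answers_mono[OF ext pb] by auto
  moreover have "inst Y1 = (inst Y)(j := inst X1 j)" unfolding X1 Y1_def by simp
  ultimately show ?thesis by blast
qed

lemma trav_path_mono:
  assumes "positive_model P" "trav_path P X (map (Pair j) ts) X'" "inst Y j = inst X j" "db X \<subseteq> db Y"
  shows "\<exists>Y'. trav_path P Y (map (Pair j) ts) Y' \<and> db X' \<subseteq> db Y' \<and> inst Y' = (inst Y)(j := inst X' j)"
  using assms(2-)
proof (induction ts arbitrary: X Y)
  case Nil then show ?case by auto
next
  case (Cons t ts)
  then obtain X1 where x1: "trav P X j t X1" and p: "trav_path P X1 (map (Pair j) ts) X'" by auto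
  from trav_mono[OF assms(1) x1 Cons.prems(2,3)] obtain Y1 where
    y1: "trav P Y j t Y1" "db X1 \<subseteq> db Y1" "inst Y1 = (inst Y)(j := inst X1 j)" by blast
  then have "inst Y1 j = inst X1 j" by simp
  from Cons.IH[OF p this y1(2)] obtain Y' where
    "trav_path P Y1 (map (Pair j) ts) Y'" "db X' \<subseteq> db Y'" "inst Y' = (inst Y1)(j := inst X' j)" by blast
  then show ?case using y1 by (intro exI[of _ Y']) auto
qed

subsection \<open>Safe steps along cycles\<close>

text \<open>The induction rotates the cycle by one step at each stage, so that its next step is
  always the first one.\<close>
lemma cycle_prefix_safe:
  assumes "positive_model P"
  shows "trav_path P X (map (Pair j) ts) X' \<Longrightarrow> inst X' j = inst X j \<Longrightarrow> inst Y j = inst X j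
    \<Longrightarrow> db X \<subseteq> db Y \<Longrightarrow> n \<le> length ts \<Longrightarrow> \<exists>Y'. safe_path P Y (map (Pair j) (take n ts)) Y'"
proof (induction n arbitrary: X X' Y ts)
  case 0 then show ?case by auto
next
  case (Suc n)
  then obtain t ts' where ts: "ts = t # ts'" by (cases ts) auto
  with Suc.prems obtain X1 where x1: "trav P X j t X1" and p: "trav_path P X1 (map (Pair j) ts') X'"
    by auto
  from trav_mono[OF assms x1 Suc.prems(3,4)] obtain Y1 where
    y1: "trav P Y j t Y1" "db X1 \<subseteq> db Y1" "inst Y1 = (inst Y)(j := inst X1 j)" by blast
  have y1j: "inst Y1 j = inst X1 j" using y1(3) by simp
  from trav_path_mono[OF assms p y1j y1(2)] obtain Y2 where
    y2: "trav_path P Y1 (map (Pair j) ts') Y2" "inst Y2 = (inst Y1)(j := inst X' j)" by blast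
  have "map_option snd (inst Y2 j) = map_option snd (inst Y j)" using y2(2) Suc.prems by simp
  then have safe: "safe_step P Y j t" unfolding safe_step_def using y1(1) y2(1) by blast
  have "db X \<subseteq> db X'" using trav_path_db_mono[OF p] trav_db_mono[OF x1] by auto
  from trav_mono[OF assms x1 Suc.prems(2) this] obtain X'' where
    x'': "trav P X' j t X''" "inst X'' = (inst X')(j := inst X1 j)" by blast
  have rotated: "trav_path P X1 (map (Pair j) (ts' @ [t])) X''"
    using p x''(1) by (auto simp: trav_path_append)
  have "inst X'' j = inst X1 j" using x''(2) by simp
  from Suc.IH[OF rotated this y1j y1(2)] Suc.prems(5) ts obtain Y' where
    "safe_path P Y1 (map (Pair j) (take n (ts' @ [t]))) Y'" by auto
  moreover have "take n (ts' @ [t]) = take n ts'" using Suc.prems(5) ts by simp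
  ultimately show ?case using safe y1(1) ts by auto
qed

lemma safe_path_reversible:
  assumes "positive_model P"
  shows "safe_path P D s D' \<Longrightarrow> \<exists>u D''. safe_path P D' u D'' \<and> inst D'' = inst D"
proof (induction s arbitrary: D)
  case Nil then show ?case by (intro exI[of _ "[]"]) auto
next
  case (Cons a s)
  obtain j t where a: "a = (j, t)" by (cases a)
  from Cons.prems a obtain D1 where safe: "safe_step P D j t" and d1: "trav P D j t D1"
    and sp: "safe_path P D1 s D'" by auto
  from Cons.IH[OF sp] obtain u D'' where u: "safe_path P D' u D''" "inst D'' = inst D1" by blast
  from safe obtain C1 ts C2 where c1: "trav P D j t C1" and return: "trav_path P C1 (map (Pair j) ts) C2"
    and ret: "map_option snd (inst C2 j) = map_option snd (inst D j)"
    unfolding safe_step_def by blast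
  have "C1 = D1" using trav_deterministic[OF c1 d1] .
  note return = return[unfolded this]
  from trav_inst[OF d1] obtain r where r: "inst D j = Some (r, src P t)"
    "inst D1 = (inst D)(j \<mapsto> (r, tgt P t))" by blast
  then have "inst D1 j = Some (r, tgt P t)" by simp
  from trav_path_keeps_record[OF return this] obtain q' where "inst C2 j = Some (r, q')" by blast
  with ret r have c2j: "inst C2 j = inst D j" by simp
  have "db D \<subseteq> db C2" using trav_db_mono[OF d1] trav_path_db_mono[OF return] by auto
  from trav_mono[OF assms d1 c2j this] obtain C3 where
    c3: "trav P C2 j t C3" "inst C3 = (inst C2)(j := inst D1 j)" by blast
  have cycle: "trav_path P D1 (map (Pair j) (ts @ [t])) C3"
    using return c3(1) by (auto simp: trav_path_append)
  have c3j: "inst C3 j = inst D1 j" using c3(2) by simp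
  have d''j: "inst D'' j = inst D1 j" using u(2) by simp
  have dbD1: "db D1 \<subseteq> db D''" using safe_path_db_mono[OF sp] safe_path_db_mono[OF u(1)] by auto
  from cycle_prefix_safe[OF assms cycle c3j d''j dbD1, of "length ts"] obtain D3 where
    d3: "safe_path P D'' (map (Pair j) ts) D3" by auto
  from trav_path_mono[OF assms return d''j dbD1] obtain Y' where
    y': "trav_path P D'' (map (Pair j) ts) Y'" "inst Y' = (inst D'')(j := inst C2 j)" by blast
  have "D3 = Y'" using trav_path_deterministic[OF safe_path_imp_trav_path[OF d3] y'(1)] .
  then have "inst D3 = inst D" using y'(2) u(2) r c2j by auto
  moreover have "safe_path P D' (u @ map (Pair j) ts) D3" using u(1) d3 by (auto simp: safe_path_append)
  ultimately show ?case by blast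
qed

subsection \<open>The finite universe of reachable facts\<close>

definition active_domain :: "('p, 'r, 'c) config \<Rightarrow> 'c val set" where
  "active_domain C0 = {v. \<exists>R xs. (R, xs) \<in> db C0 \<and> v \<in> set xs} \<union>
     {v. \<exists>i r q. inst C0 i = Some (r, q) \<and> (v \<in> set (fst r) \<or> v = TS (snd r))}"

definition max_head_arity :: "('p, 't, 'r, 'x, 'c) proc_model \<Rightarrow> nat" where
  "max_head_arity P = Max (insert 0 ((\<lambda>t. length (whead P t)) ` trans P))"

definition fact_universe :: "('p, 't, 'r, 'x, 'c) proc_model \<Rightarrow> ('p, 'r, 'c) config \<Rightarrow> ('r, 'c) fact set" where
  "fact_universe P C0 = db C0 \<union>
     {(R, xs). R \<in> wrel P ` trans P \<and> set xs \<subseteq> active_domain C0 \<and> length xs \<le> max_head_arity P}"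

definition within_universe :: "('p, 't, 'r, 'x, 'c) proc_model \<Rightarrow> ('p, 'r, 'c) config \<Rightarrow> ('p, 'r, 'c) config \<Rightarrow> bool" where
  "within_universe P C0 C \<longleftrightarrow> db C \<subseteq> fact_universe P C0 \<and>
     (\<forall>i r q. inst C i = Some (r, q) \<longrightarrow> (\<exists>q0. inst C0 i = Some (r, q0)))"

lemma within_universe_refl: "within_universe P C0 C0"
  unfolding within_universe_def fact_universe_def by auto

lemma finite_fact_universe:
  assumes "finite (db C0)" "finite (dom (inst C0))" "finite (trans P)"
  shows "finite (fact_universe P C0)"
proof -
  have "{v. \<exists>R xs. (R, xs) \<in> db C0 \<and> v \<in> set xs} \<subseteq> \<Union> ((\<lambda>f. set (snd f)) ` db C0)"
    by force
  moreover have "{v. \<exists>i r q. inst C0 i = Some (r, q) \<and> (v \<in> set (fst r) \<or> v = TS (snd r))}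
      \<subseteq> \<Union> ((\<lambda>x. insert (TS (snd (fst x))) (set (fst (fst x)))) ` ran (inst C0))"
    by (force simp: ran_def)
  moreover have "finite (\<Union> ((\<lambda>f. set (snd f)) ` db C0))" using assms(1) by auto
  moreover have "finite (\<Union> ((\<lambda>x. insert (TS (snd (fst x))) (set (fst (fst x)))) ` ran (inst C0)))"
    using assms(2) finite_ran by auto
  ultimately have "finite (active_domain C0)" unfolding active_domain_def by (meson finite_UnI finite_subset)
  then have "finite ((wrel P ` trans P) \<times> {xs. set xs \<subseteq> active_domain C0 \<and> length xs \<le> max_head_arity P})"
    using assms(3) finite_lists_length_le by auto
  moreover have "{(R, xs). R \<in> wrel P ` trans P \<and> set xs \<subseteq> active_domain C0 \<and> length xs \<le> max_head_arity P}
     \<subseteq> (wrel P ` trans P) \<times> {xs. set xs \<subseteq> active_domain C0 \<and> length xs \<le> max_head_arity P}" by auto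
  ultimately show ?thesis unfolding fact_universe_def using assms(1) finite_subset by auto
qed

lemma ext_db_values:
  assumes "within_universe P C0 C" "inst C i = Some (r, q)" "(Rn, u) \<in> ext_db (db C) r"
  shows "set u \<subseteq> active_domain C0"
proof (cases "Rn = InRel")
  case True
  then have u: "u = fst r @ [TS (snd r)]" using assms(3) unfolding ext_db_def by auto
  from assms(1,2) obtain q0 where "inst C0 i = Some (r, q0)" unfolding within_universe_def by blast
  then show ?thesis unfolding u active_domain_def by (cases r) fastforce
next
  case False
  then obtain R where "(R, u) \<in> db C" using assms(3) unfolding ext_db_def by auto
  then have "(R, u) \<in> fact_universe P C0" using assms(1) unfolding within_universe_def by auto
  then show ?thesis unfolding fact_universe_def active_domain_def by auto
qed

lemma answers_values:
  assumes "range_restricted q (set us)" "\<forall>(Rn, u)\<in>I. set u \<subseteq> V" "xs \<in> answers I q us"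
  shows "set xs \<subseteq> V \<and> length xs = length us"
proof -
  from assms(3) obtain \<nu> where xs: "xs = map \<nu> us" and sat: "\<forall>l\<in>set q. sat_lit I \<nu> l"
    unfolding answers_def by blast
  have "\<nu> x \<in> V" if x: "x \<in> set us" for x
  proof -
    from assms(1) x obtain l where l: "l \<in> set q" "x \<in> pos_vars_lit l"
      unfolding range_restricted_def by blast
    obtain Rn ts where l_def: "l = Pos Rn ts" using l(2) by (cases l) auto
    with l obtain tm where tm: "tm \<in> set ts" "x \<in> trm_vars tm" by auto
    have "tm = Var x" using tm(2) by (cases tm) auto
    with tm have "\<nu> x \<in> set (map (eval_trm \<nu>) ts)" by force
    moreover have "(Rn, map (eval_trm \<nu>) ts) \<in> I" using sat l l_def by fastforce
    ultimately show ?thesis using assms(2) by blast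
  qed
  then show ?thesis using xs by auto
qed

lemma within_universe_trav:
  assumes "wf_model P" "within_universe P C0 C" "trav P C i t C1"
  shows "within_universe P C0 C1"
proof -
  from assms(3) obtain r where t: "t \<in> trans P" and r: "inst C i = Some (r, src P t)"
    and C1: "C1 = C\<lparr> inst := (inst C)(i \<mapsto> (r, tgt P t)),
               db := db C \<union> {(wrel P t, u) | u. u \<in> answers (ext_db (db C) r) (wbody P t) (whead P t)} \<rparr>"
    unfolding trav_def by blast
  have rr: "range_restricted (wbody P t) (set (whead P t))" and ft: "finite (trans P)"
    using assms(1) t unfolding wf_model_def by auto
  have ext: "\<forall>(Rn, u)\<in>ext_db (db C) r. set u \<subseteq> active_domain C0"
    using ext_db_values[OF assms(2) r] by blast
  have "(wrel P t, u) \<in> fact_universe P C0"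
    if "u \<in> answers (ext_db (db C) r) (wbody P t) (whead P t)" for u
  proof -
    have "length (whead P t) \<le> max_head_arity P"
      unfolding max_head_arity_def using ft t by (intro Max_ge) auto
    then show ?thesis using answers_values[OF rr ext that] t unfolding fact_universe_def by auto
  qed
  moreover have "\<exists>q0. inst C0 i = Some (r, q0)" using assms(2) r unfolding within_universe_def by blast
  ultimately show ?thesis using assms(2) unfolding C1 within_universe_def by auto
qed

lemma within_universe_trav_path:
  "wf_model P \<Longrightarrow> within_universe P C0 C \<Longrightarrow> trav_path P C s C' \<Longrightarrow> within_universe P C0 C'"
proof (induction s arbitrary: C)
  case (Cons a s) then show ?case by (cases a) (auto dest: within_universe_trav)
qed simp

lemma within_universe_safe_path:
  assumes "wf_model P" "within_universe P C0 C" "safe_path P C s C'"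
  shows "within_universe P C0 C'"
  using within_universe_trav_path[OF assms(1,2) safe_path_imp_trav_path[OF assms(3)]] .

lemma greedy_seq_exists:
  assumes "wf_model P" "finite (fact_universe P C0)" "within_universe P C0 C"
  shows "\<exists>s D. greedy_seq P C s D"
proof -
  define S where "S = {card (db C' - db C) | s C'. safe_path P C s C'}"
  have "S \<subseteq> {..card (fact_universe P C0)}"
  proof
    fix k assume "k \<in> S"
    then obtain s C' where k: "k = card (db C' - db C)" and sp: "safe_path P C s C'"
      unfolding S_def by blast
    have "db C' - db C \<subseteq> fact_universe P C0"
      using within_universe_safe_path[OF assms(1,3) sp] unfolding within_universe_def by auto
    then have "k \<le> card (fact_universe P C0)" unfolding k by (rule card_mono[OF assms(2)])
    then show "k \<in> {..card (fact_universe P C0)}" by simp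
  qed
  then have fin: "finite S" using finite_subset by blast
  have "card (db C - db C) \<in> S" unfolding S_def by (intro CollectI exI[of _ "[]"] exI[of _ C]) auto
  then have "Max S \<in> S" using Max_in[OF fin] by auto
  then obtain s D where sd: "Max S = card (db D - db C)" "safe_path P C s D" unfolding S_def by auto
  have "greedy_seq P C s D" unfolding greedy_seq_def
  proof (intro conjI sd(2) allI impI)
    fix s' C'' assume "safe_path P C s' C''"
    then have "card (db C'' - db C) \<in> S" unfolding S_def by blast
    then show "card (db C'' - db C) \<le> card (db D - db C)" using Max_ge[OF fin] sd(1) by metis
  qed
  then show ?thesis by blast
qed

lemma greedy_seq_append_safe_path:
  assumes "wf_model P" "finite (fact_universe P C0)" "within_universe P C0 C"
    and "greedy_seq P C s D" "safe_path P D s' D'"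
  shows "greedy_seq P C (s @ s') D'"
  unfolding greedy_seq_def
proof (intro conjI allI impI)
  have sp: "safe_path P C s D" using assms(4) unfolding greedy_seq_def by auto
  then show "safe_path P C (s @ s') D'" using assms(5) by (auto simp: safe_path_append)
  fix s'' C'' assume "safe_path P C s'' C''"
  then have "card (db C'' - db C) \<le> card (db D - db C)" using assms(4) unfolding greedy_seq_def by auto
  also have "\<dots> \<le> card (db D' - db C)"
  proof (rule card_mono)
    have "within_universe P C0 D'"
      using within_universe_safe_path[OF assms(1)] assms(3,5) sp by blast
    then show "finite (db D' - db C)"
      using assms(2) finite_subset unfolding within_universe_def by blast
    show "db D - db C \<subseteq> db D' - db C" using safe_path_db_mono[OF assms(5)] by auto
  qed
  finally show "card (db C'' - db C) \<le> card (db D' - db C)" .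
qed

lemma greedy_seq_restoring_places:
  assumes "wf_model P" "finite (fact_universe P C0)" "positive_model P" "within_universe P C0 D"
  shows "\<exists>g D'. greedy_seq P D g D' \<and> inst D' = inst D \<and> db D \<subseteq> db D' \<and> within_universe P C0 D'"
proof -
  from greedy_seq_exists[OF assms(1,2,4)] obtain g D1 where g: "greedy_seq P D g D1" by blast
  then have sg: "safe_path P D g D1" unfolding greedy_seq_def by auto
  from safe_path_reversible[OF assms(3) sg] obtain u D' where
    u: "safe_path P D1 u D'" "inst D' = inst D" by blast
  have "greedy_seq P D (g @ u) D'" using greedy_seq_append_safe_path[OF assms(1,2,4) g u(1)] .
  moreover have "db D \<subseteq> db D'" using safe_path_db_mono[OF sg] safe_path_db_mono[OF u(1)] by auto
  moreover have "within_universe P C0 D'"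
    using within_universe_safe_path[OF assms(1)] assms(4) sg u(1) by blast
  ultimately show ?thesis using u(2) by blast
qed

lemma greedy_exec_append_safe_path:
  assumes "wf_model P" "finite (fact_universe P C0)"
  shows "greedy_exec P C s D \<Longrightarrow> within_universe P C0 C \<Longrightarrow> safe_path P D s' D'
    \<Longrightarrow> greedy_exec P C (s @ s') D'"
proof (induction rule: greedy_exec.induct)
  case (greedy_last C s C')
  then show ?case using greedy_seq_append_safe_path[OF assms] greedy_exec.greedy_last by blast
next
  case (greedy_crit C s C1 i t C2 s'' C')
  have "within_universe P C0 C1"
    using within_universe_safe_path[OF assms(1) greedy_crit.prems(1)] greedy_crit.hyps(1)
    unfolding greedy_seq_def by blast
  then have "within_universe P C0 C2" using within_universe_trav[OF assms(1) _ greedy_crit.hyps(3)] by blast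
  then have "greedy_exec P C2 (s'' @ s') D'" using greedy_crit.IH greedy_crit.prems(2) by blast
  then show ?case using greedy_exec.greedy_crit[OF greedy_crit.hyps(1-3)] by auto
qed

lemma greedy_exec_append_critical:
  "greedy_exec P C s D \<Longrightarrow> critical_step P D i t \<Longrightarrow> trav P D i t D1 \<Longrightarrow> greedy_seq P D1 g D2
   \<Longrightarrow> greedy_exec P C (s @ (i, t) # g) D2"
proof (induction rule: greedy_exec.induct)
  case (greedy_last C s C')
  then show ?case by (blast intro: greedy_exec.intros)
next
  case (greedy_crit C s C1 i' t' C2 s'' C')
  then show ?case using greedy_exec.greedy_crit[OF greedy_crit.hyps(1-3)] by fastforce
qed

subsection \<open>Simulation of closed executions\<close>

lemma greedy_exec_simulates_trav_path:
  assumes wf: "wf_model P" and fin: "finite (fact_universe P C0)" and pos: "positive_model P"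
  shows "trav_path P E s C \<Longrightarrow> greedy_exec P C0 s0 D \<Longrightarrow> inst D = inst E \<Longrightarrow> db E \<subseteq> db D
    \<Longrightarrow> within_universe P C0 D \<Longrightarrow> \<exists>s' C'. greedy_exec P C0 s' C' \<and> db C \<subseteq> db C'"
proof (induction s arbitrary: E s0 D)
  case Nil then show ?case by auto
next
  case (Cons a s)
  obtain i t where a: "a = (i, t)" by (cases a)
  from Cons.prems a obtain E1 where e1: "trav P E i t E1" and p: "trav_path P E1 s C" by auto
  have "inst D i = inst E i" using Cons.prems(3) by simp
  from trav_mono[OF pos e1 this Cons.prems(4)] obtain D1 where
    d1: "trav P D i t D1" "db E1 \<subseteq> db D1" "inst D1 = (inst D)(i := inst E1 i)" by blast
  have places: "inst D1 = inst E1" using d1(3) trav_inst[OF e1] Cons.prems(3) by auto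
  have univ: "within_universe P C0 D1" using within_universe_trav[OF wf Cons.prems(5) d1(1)] .
  show ?case
  proof (cases "safe_step P D i t")
    case True
    then have "safe_path P D [(i, t)] D1" using d1(1) by auto
    with greedy_exec_append_safe_path[OF wf fin Cons.prems(2) within_universe_refl]
    have "greedy_exec P C0 (s0 @ [(i, t)]) D1" .
    from Cons.IH[OF p this places d1(2) univ] show ?thesis .
  next
    case False
    then have crit: "critical_step P D i t" unfolding critical_step_def using d1(1) by blast
    from greedy_seq_restoring_places[OF wf fin pos univ] obtain g D2 where
      g: "greedy_seq P D1 g D2" "inst D2 = inst D1" "db D1 \<subseteq> db D2" "within_universe P C0 D2"
      by blast
    have "greedy_exec P C0 (s0 @ (i, t) # g) D2"
      using greedy_exec_append_critical[OF Cons.prems(2) crit d1(1) g(1)] .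
    moreover have "inst D2 = inst E1" "db E1 \<subseteq> db D2" using g(2,3) places d1(2) by auto
    ultimately show ?thesis using Cons.IH[OF p _ _ _ g(4)] by blast
  qed
qed

theorem lemma4:
  fixes B :: "('p, 't, 'r, 'x, 'c) mdabp"
    and W :: "('r, 'c) fact set"
  assumes "wf_mdabp B"
    and "positive B"
    and "trav_path (model B) (conf B) s C"
    and "W \<subseteq> db C"
  shows "\<exists>s' C'. greedy_exec (model B) (conf B) s' C' \<and> W \<subseteq> db C'"
proof -
  let ?P = "model B" and ?C0 = "conf B"
  have wf: "wf_model ?P" and wc: "wf_config ?P ?C0" using assms(1) unfolding wf_mdabp_def by auto
  have pos: "positive_model ?P" using assms(2) unfolding positive_def positive_model_def .
  have fin: "finite (fact_universe ?P ?C0)"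
    using wf wc unfolding wf_model_def wf_config_def by (intro finite_fact_universe) auto
  from greedy_seq_restoring_places[OF wf fin pos within_universe_refl] obtain g D where
    g: "greedy_seq ?P ?C0 g D" "inst D = inst ?C0" "db ?C0 \<subseteq> db D" "within_universe ?P ?C0 D"
    by blast
  from greedy_exec_simulates_trav_path[OF wf fin pos assms(3) greedy_exec.greedy_last[OF g(1)] g(2-4)]
  obtain s' C' where "greedy_exec ?P ?C0 s' C'" "db C \<subseteq> db C'" by blast
  then show ?thesis using assms(4) by blast
qed

end
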